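(* Let $F,L,\Sigma,\alpha,\bar v$ be as below, and set $\bar\omega=\alpha+\bar v$. Fix $b\in(0,1)$. Let $\mathcal{P}^*$ be a solution of the convex program $$\min_{\mathcal{P}}\ -\log\det\mathcal{P}\quad\text{s.t.}\quad \mathcal{P}\succ 0\ \text{ and }\ \mathrm{(LMI)} .$$ Then: (i) the ellipsoid $\mathcal{E}^*=\{e: e^T\mathcal{P}^*e\le1\}$ contains the reachable set $\mathcal{R}$; (ii) among all ellipsoids $\{e: e^T\mathcal{P}e\le 1\}$ with $\mathcal{P}\succ0$ satisfying (LMI) for this $b$, the ellipsoid $\mathcal{E}^*$ has minimal volume.
   Context: $F\in\mathbb{R}^{n\times n}$, $L\in\mathbb{R}^{n\times m}$, $\Sigma\in\mathbb{R}^{m\times m}$ symmetric positive definite with symmetric square root $\Sigma^{1/2}$, and $\alpha,\bar v>0$. (LMI) denotes the matrix inequality $$\begin{bmatrix} b\mathcal{P} & F^T \mathcal{P} & 0 & 0 & 0 & 0\\ \mathcal{P} F & \mathcal{P} & \mathcal{P} & -\mathcal{P} L \Sigma^{1/2} & 0 & 0\\ 0 & \mathcal{P} & \tfrac{1-b}{\bar{\omega}}I & 0 & 0 & 0\\ 0 & -\Sigma^{1/2}L^T \mathcal{P} & 0 & \tfrac{1-b}{\bar{\omega}}I & 0 & 0\\ 0 & 0 & 0 & 0 & I & 0\\ 0 & 0 & 0 & 0 & 0 & I \end{bmatrix}\succeq 0 .$$ $\mathcal{R}$ is the set of all states $e_k$ ($k\in\mathbb{N}$) of $e_{k+1}=Fe_k-L\Sigma^{1/2}\zeta_k+v_k$,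 $e_1=0$, over all input sequences with $\|\zeta_k\|^2\le\alpha$ and $\|v_k\|^2\le\bar v$ for all $k$. The volume of $\{e:e^T\mathcal{P}e\le1\}$ is proportional to $(\det\mathcal{P})^{-1/2}$. *)

theory Defs
  imports "HOL-Analysis.Analysis"
begin

definition psd :: "real^'k^'k \<Rightarrow> bool" where
  "psd M \<longleftrightarrow> transpose M = M \<and> (\<forall>x. 0 \<le> x \<bullet> (M *v x))"

definition pd :: "real^'k^'k \<Rightarrow> bool" where
  "pd M \<longleftrightarrow> transpose M = M \<and> (\<forall>x. x \<noteq> 0 \<longrightarrow> 0 < x \<bullet> (M *v x))"

(* The block matrix of (LMI); block rows/columns indexed by 'n, 'n, 'n, 'm.
   Sh stands for Sigma^(1/2), w for omega-bar. The two trailing identity blocks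
   are decoupled and omitted. *)
definition lmi_mat ::
  "real \<Rightarrow> real \<Rightarrow> real^'n^'n \<Rightarrow> real^'m^'n \<Rightarrow> real^'m^'m \<Rightarrow> real^'n^'n
   \<Rightarrow> real^('n + ('n + ('n + 'm)))^('n + ('n + ('n + 'm)))" where
  "lmi_mat b w F L Sh P = (let c = (1 - b) / w in
    (\<chi> r s. (case r of
       Inl i \<Rightarrow> (case s of
           Inl j \<Rightarrow> b * P $ i $ j
         | Inr (Inl j) \<Rightarrow> (transpose F ** P) $ i $ j
         | Inr (Inr (Inl j)) \<Rightarrow> 0
         | Inr (Inr (Inr j)) \<Rightarrow> 0)
     | Inr (Inl i) \<Rightarrow> (case s of
           Inl j \<Rightarrow> (P ** F) $ i $ j
         | Inr (Inl j) \<Rightarrow> P $ i $ j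
         | Inr (Inr (Inl j)) \<Rightarrow> P $ i $ j
         | Inr (Inr (Inr j)) \<Rightarrow> - ((P ** L ** Sh) $ i $ j))
     | Inr (Inr (Inl i)) \<Rightarrow> (case s of
           Inl j \<Rightarrow> 0
         | Inr (Inl j) \<Rightarrow> P $ i $ j
         | Inr (Inr (Inl j)) \<Rightarrow> c * (mat 1 :: real^'n^'n) $ i $ j
         | Inr (Inr (Inr j)) \<Rightarrow> 0)
     | Inr (Inr (Inr i)) \<Rightarrow> (case s of
           Inl j \<Rightarrow> 0
         | Inr (Inl j) \<Rightarrow> - ((Sh ** transpose L ** P) $ i $ j)
         | Inr (Inr (Inl j)) \<Rightarrow> 0
         | Inr (Inr (Inr j)) \<Rightarrow> c * (mat 1 :: real^'m^'m) $ i $ j))))"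

(* Trajectory of e_{k+1} = F e_k - L Sigma^(1/2) zeta_k + v_k with e_1 = 0;
   traj ... k is e_{k+1}, zeta k is zeta_{k+1}, v k is v_{k+1}. *)
primrec traj :: "real^'n^'n \<Rightarrow> real^'m^'n \<Rightarrow> real^'m^'m \<Rightarrow> (nat \<Rightarrow> real^'m)
    \<Rightarrow> (nat \<Rightarrow> real^'n) \<Rightarrow> nat \<Rightarrow> real^'n" where
  "traj F L Sh z v 0 = 0"
| "traj F L Sh z v (Suc k) = F *v traj F L Sh z v k - L *v (Sh *v z k) + v k"

definition reach_set ::
  "real^'n^'n \<Rightarrow> real^'m^'n \<Rightarrow> real^'m^'m \<Rightarrow> real \<Rightarrow> real \<Rightarrow> (real^'n) set" where
  "reach_set F L Sh \<alpha> vb = {traj F L Sh z v k | z v k.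
      (\<forall>j. norm (z j) ^ 2 \<le> \<alpha>) \<and> (\<forall>j. norm (v j) ^ 2 \<le> vb)}"

definition ellipsoid :: "real^'n^'n \<Rightarrow> (real^'n) set" where
  "ellipsoid P = {e. e \<bullet> (P *v e) \<le> 1}"

end

theory Submission
  imports Defs
begin

text \<open>(i) Evaluating the quadratic form of the LMI at \<open>(e, -e\<^sub>+, v, \<zeta>)\<close>, with \<open>e\<^sub>+\<close> the
  successor state, gives \<open>V(e\<^sub>+) \<le> b V(e) + (1 - b)/\<omega> (|v|\<^sup>2 + |\<zeta>|\<^sup>2)\<close> for \<open>V(e) = e\<^sup>T P e\<close>;
  under the input bounds the right-hand side is at most \<open>b + (1 - b) = 1\<close> whenever \<open>V(e) \<le> 1\<close>, so
  the ellipsoid is invariant and contains every trajectory started at \<open>0\<close>.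
  (ii) Symmetric Gaussian elimination makes a positive definite \<open>P\<close> congruent to the identity,
  \<open>B\<^sup>T P B = I\<close>; the ellipsoid of \<open>P\<close> is then the image of the unit ball under \<open>B\<close>, of volume
  \<open>vol(ball) / \<surd>det P\<close>, so minimizing \<open>-log det P\<close> minimizes the volume.\<close>

lemma inner_matrix_transpose:
  fixes G :: "real^'a^'b"
  shows "a \<bullet> (G *v c) = (transpose G *v a) \<bullet> c"
  by (simp add: dot_lmul_matrix[symmetric] inner_commute)

lemma inner_transpose_matrix:
  fixes G :: "real^'a^'b"
  shows "a \<bullet> (transpose G *v c) = (G *v a) \<bullet> c"
  using inner_matrix_transpose[of a "transpose G" c] by simp

lemma inner_symmetric_matrix:
  fixes P :: "real^'n^'n"
  assumes "transpose P = P"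
  shows "a \<bullet> (P *v c) = c \<bullet> (P *v a)"
  using inner_matrix_transpose[of a P c] assms by (simp add: inner_commute)

lemma quadratic_form_congruence:
  fixes P B :: "real^'n^'n"
  shows "(B *v x) \<bullet> (P *v (B *v x)) = x \<bullet> ((transpose B ** P ** B) *v x)"
  by (simp only: matrix_vector_mul_assoc[symmetric] inner_transpose_matrix)

lemma congruence_entry:
  fixes E M :: "real^'n^'n"
  shows "(transpose E ** M ** E) $ i $ j = column i E \<bullet> (M *v column j E)"
  by (simp add: matrix_matrix_mult_def inner_vec_def matrix_vector_mult_def column_def
      transpose_def sum_distrib_left sum_distrib_right mult.assoc mult.left_commute)
   (rule sum.swap)

lemma inner_axis_matrix_axis:
  fixes M :: "real^'n^'n"
  shows "axis a 1 \<bullet> (M *v axis b 1) = M $ a $ b"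
  by (simp add: matrix_vector_mult_basis column_def inner_axis')

section \<open>Congruence of positive definite matrices to the identity\<close>

lemma pd_symmetric_entry: "pd M \<Longrightarrow> M $ a $ b = M $ b $ a"
  unfolding pd_def by (metis transpose_def vec_lambda_beta)

lemma pd_diagonal_pos: "pd (M :: real^'n^'n) \<Longrightarrow> 0 < M $ k $ k"
  unfolding pd_def by (metis inner_axis_matrix_axis axis_eq_0_iff zero_neq_one)

lemma pd_congruence:
  fixes P B :: "real^'n^'n"
  assumes P: "pd P" and B: "invertible B"
  shows "pd (transpose B ** P ** B)"
  unfolding pd_def
proof safe
  have "transpose P = P" using P by (simp add: pd_def)
  then show "transpose (transpose B ** P ** B) = transpose B ** P ** B"
    by (simp add: matrix_transpose_mul matrix_mul_assoc)
next
  fix x :: "real^'n" assume "x \<noteq> 0"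
  moreover have "inj ((*v) B)"
    using B by (meson invertible_left_inverse matrix_left_invertible_injective)
  ultimately have "B *v x \<noteq> 0" by (metis injD matrix_vector_mult_0_right)
  then show "0 < x \<bullet> ((transpose B ** P ** B) *v x)"
    using P by (simp add: pd_def flip: quadratic_form_congruence)
qed

definition identity_on :: "'n set \<Rightarrow> real^'n^'n \<Rightarrow> bool" where
  "identity_on K M \<longleftrightarrow> (\<forall>i j. i \<in> K \<or> j \<in> K \<longrightarrow> M $ i $ j = of_bool (i = j))"

lemma identity_on_UNIV: "identity_on UNIV M \<longleftrightarrow> M = mat 1"
  by (auto simp: identity_on_def vec_eq_iff mat_def)

text \<open>One step of symmetric Gaussian elimination with pivot \<open>m = M\<^sub>k\<^sub>k\<close>: the columns \<open>e\<^sub>k / \<surd>m\<close>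
  and \<open>e\<^sub>c - (M\<^sub>k\<^sub>c / m) e\<^sub>k\<close> (\<open>c \<noteq> k\<close>) normalize coordinate \<open>k\<close> and make it \<open>M\<close>-orthogonal to
  the others, without disturbing coordinates that are already normalized.\<close>

definition pivot_column :: "real^'n^'n \<Rightarrow> 'n \<Rightarrow> 'n \<Rightarrow> real^'n" where
  "pivot_column M k c = (if c = k then (1 / sqrt (M $ k $ k)) *\<^sub>R axis k 1
     else axis c 1 - (M $ k $ c / M $ k $ k) *\<^sub>R axis k 1)"

definition pivot_matrix :: "real^'n^'n \<Rightarrow> 'n \<Rightarrow> real^'n^'n" where
  "pivot_matrix M k = (\<chi> r c. pivot_column M k c $ r)"

lemma invertible_pivot_matrix:
  fixes M :: "real^'n^'n"
  assumes pos: "0 < M $ k $ k"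
  shows "invertible (pivot_matrix M k)"
proof -
  let ?E = "pivot_matrix M k"
  have "x = 0" if x: "?E *v x = 0" for x
  proof -
    have off_k: "x $ r = 0" if "r \<noteq> k" for r
    proof -
      have "pivot_column M k c $ r = (if c = r then 1 else 0)" for c
        using that by (auto simp: pivot_column_def axis_def)
      then have "(?E *v x) $ r = x $ r"
        by (simp add: pivot_matrix_def matrix_vector_mult_def mult_delta_left)
      with x show ?thesis by simp
    qed
    have "(?E *v x) $ k = (\<Sum>c\<in>UNIV. pivot_column M k c $ k * x $ c)"
      by (simp add: pivot_matrix_def matrix_vector_mult_def)
    also have "\<dots> = pivot_column M k k $ k * x $ k"
      by (subst sum.remove[of UNIV k]) (auto simp: off_k)
    finally have "x $ k / sqrt (M $ k $ k) = 0"
      using x by (simp add: pivot_column_def)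
    with pos have "x $ k = 0" by simp
    with off_k show "x = 0" by (metis vec_eq_iff zero_index)
  qed
  then have "inj ((*v) ?E)"
    by (simp add: linear_injective_0[OF matrix_vector_mul_linear])
  then show ?thesis
    by (meson invertible_left_inverse matrix_left_invertible_injective)
qed

lemma pivot_congruence_row:
  fixes M :: "real^'n^'n"
  assumes pd: "pd M" and K: "identity_on K M" and i: "i \<in> insert k K"
  shows "(transpose (pivot_matrix M k) ** M ** pivot_matrix M k) $ i $ j = of_bool (i = j)"
proof -
  define m where "m = M $ k $ k"
  have m0: "0 < m" using pd_diagonal_pos[OF pd] by (simp add: m_def)
  then have sqrt_m: "sqrt m * sqrt m = m" by simp
  have entry: "(transpose (pivot_matrix M k) ** M ** pivot_matrix M k) $ i $ j
      = pivot_column M k i \<bullet> (M *v pivot_column M k j)"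
    by (simp add: congruence_entry column_def pivot_matrix_def)
  show ?thesis
  proof (cases "i = k")
    case True
    then show ?thesis
      using m0 sqrt_m unfolding entry
      by (cases "j = k") (simp_all add: pivot_column_def inner_axis_matrix_axis
          matrix_vector_mult_scaleR m_def[symmetric] field_simps inner_diff_right
          matrix_vector_mult_diff_distrib)
  next
    case False
    with i K have "M $ i $ j = of_bool (i = j)" "M $ i $ k = 0" "M $ k $ i = 0"
      by (auto simp: identity_on_def pd_symmetric_entry[OF pd, of k i])
    with False show ?thesis
      unfolding entry
      by (cases "j = k") (simp_all add: pivot_column_def inner_axis_matrix_axis
          matrix_vector_mult_scaleR inner_diff_right inner_diff_left matrix_vector_mult_diff_distrib)
  qed
qed

lemma pd_normalize_coordinate:
  fixes M :: "real^'n^'n"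
  assumes pd: "pd M" and K: "identity_on K M"
  shows "identity_on (insert k K) (transpose (pivot_matrix M k) ** M ** pivot_matrix M k)"
  unfolding identity_on_def
proof (intro allI impI)
  let ?N = "transpose (pivot_matrix M k) ** M ** pivot_matrix M k"
  fix i j assume ij: "i \<in> insert k K \<or> j \<in> insert k K"
  show "?N $ i $ j = of_bool (i = j)"
  proof (cases "i \<in> insert k K")
    case False
    with ij have "?N $ j $ i = of_bool (j = i)"
      by (simp add: pivot_congruence_row[OF pd K])
    moreover have "pd ?N"
      by (intro pd_congruence pd invertible_pivot_matrix pd_diagonal_pos)
    ultimately show ?thesis
      by (simp add: pd_symmetric_entry[of ?N i j] eq_commute[of i j])
  qed (rule pivot_congruence_row[OF pd K])
qed

lemma pd_congruent_identity:
  fixes P :: "real^'n^'n"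
  assumes "pd P"
  obtains B :: "real^'n^'n" where "invertible B" "transpose B ** P ** B = mat 1"
proof -
  have "\<exists>B. invertible B \<and> identity_on K (transpose B ** P ** B)" if "finite K" for K :: "'n set"
    using that
  proof (induction K rule: finite_induct)
    case empty
    show ?case by (rule exI[of _ "mat 1"]) (simp add: invertible_def identity_on_def)
  next
    case (insert k K)
    then obtain B where B: "invertible B" "identity_on K (transpose B ** P ** B)"
      by blast
    define E where "E = pivot_matrix (transpose B ** P ** B) k"
    have "pd (transpose B ** P ** B)" using pd_congruence[OF assms B(1)] .
    then have E: "invertible E" "identity_on (insert k K) (transpose E ** (transpose B ** P ** B) ** E)"
      unfolding E_def using B(2)
      by (simp_all add: invertible_pivot_matrix pd_diagonal_pos pd_normalize_coordinate)
    have "transpose (B ** E) ** P ** (B ** E) = transpose E ** (transpose B ** P ** B) ** E"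
      by (simp add: matrix_transpose_mul matrix_mul_assoc)
    with E B(1) show ?case by (metis invertible_mult)
  qed
  from this[of UNIV] that show ?thesis
    by (auto simp: identity_on_UNIV)
qed

section \<open>Volume of linear images for an arbitrary finite index type\<close>

text \<open>The library's change of variables formula \<open>measure_linear_image\<close> is stated for
  wellordered index types. It is transferred to an arbitrary finite index type \<open>'n\<close> along a
  bijection with the wellordered copy \<open>'n ordered_copy\<close>: relabelling coordinates preserves
  Lebesgue measure and determinants.\<close>

lemma det_relabel:
  fixes A :: "real^'n::finite^'n" and g :: "'k::finite \<Rightarrow> 'n"
  assumes g: "bij g"
  shows "det (\<chi> i j. A $ g i $ g j :: real^'k^'k) = det A"
  unfolding det_def
proof (rule sum.reindex_bij_witness[where j = "map_permutation UNIV g" and i = "map_permutation UNIV (inv g)"])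
  have gb: "bij_betw g UNIV UNIV" using g by simp
  fix p :: "'k \<Rightarrow> 'k" assume "p \<in> {p. p permutes UNIV}"
  then have p: "p permutes UNIV" by simp
  show "map_permutation UNIV (inv g) (map_permutation UNIV g p) = p"
    by (rule map_permutation_compose_inv[OF gb p]) (simp add: bij_is_inj[OF g])
  show "map_permutation UNIV g p \<in> {q. q permutes UNIV}"
    using map_permutation_permutes[OF gb p] by simp
  have "(\<Prod>j\<in>UNIV. A $ j $ map_permutation UNIV g p j) = (\<Prod>i\<in>UNIV. A $ g i $ map_permutation UNIV g p (g i))"
    using prod.reindex_bij_betw[OF gb, of "\<lambda>j. A $ j $ map_permutation UNIV g p j"] by simp
  also have "\<dots> = (\<Prod>i\<in>UNIV. A $ g i $ g (p i))"
    by (simp add: map_permutation_apply bij_is_inj[OF g])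
  finally show "of_int (sign (map_permutation UNIV g p)) * (\<Prod>j\<in>UNIV. A $ j $ map_permutation UNIV g p j)
      = of_int (sign p) * (\<Prod>i\<in>UNIV. (\<chi> i j. A $ g i $ g j :: real^'k^'k) $ i $ p i)"
    by (simp add: sign_map_permutation[OF bij_is_inj[OF g] p])
next
  have ginv: "bij_betw (inv g) UNIV UNIV" using g by (simp add: bij_imp_bij_inv)
  fix q :: "'n \<Rightarrow> 'n" assume "q \<in> {q. q permutes UNIV}"
  then have q: "q permutes UNIV" by simp
  show "map_permutation UNIV g (map_permutation UNIV (inv g) q) = q"
    by (rule map_permutation_compose_inv[OF ginv q]) (simp add: surj_f_inv_f bij_is_surj[OF g])
  show "map_permutation UNIV (inv g) q \<in> {p. p permutes UNIV}"
    using map_permutation_permutes[OF ginv q] by simp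
qed

typedef (overloaded) ('a::finite) ordered_copy = "{..<CARD('a)}"
  by (rule exI[of _ 0]) simp

instance ordered_copy :: (finite) finite
  by standard (metis type_definition.Abs_image[OF type_definition_ordered_copy] finite_imageI finite_lessThan)

instantiation ordered_copy :: (finite) linorder
begin
definition "x \<le> y \<longleftrightarrow> Rep_ordered_copy x \<le> Rep_ordered_copy y"
definition "x < y \<longleftrightarrow> Rep_ordered_copy x < Rep_ordered_copy y"
instance
  by standard (auto simp: less_eq_ordered_copy_def less_ordered_copy_def Rep_ordered_copy_inject)
end

instance ordered_copy :: (finite) wellorder
proof
  fix P :: "'a ordered_copy \<Rightarrow> bool" and a
  assume step: "\<And>x. (\<And>y. y < x \<Longrightarrow> P y) \<Longrightarrow> P x"
  show "P a"
    by (induction a rule: measure_induct_rule[of Rep_ordered_copy])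
       (rule step, simp add: less_ordered_copy_def)
qed

lemma card_ordered_copy: "CARD('a ordered_copy) = CARD('a::finite)"
  using type_definition.card[OF type_definition_ordered_copy] by simp

lemma compact_linear_image:
  fixes f :: "'a::euclidean_space \<Rightarrow> 'b::real_normed_vector"
  shows "linear f \<Longrightarrow> compact S \<Longrightarrow> compact (f ` S)"
  by (simp add: compact_continuous_image linear_continuous_on linear_conv_bounded_linear)

definition relabel :: "('k \<Rightarrow> 'n) \<Rightarrow> real^'n \<Rightarrow> real^'k" where
  "relabel g x = (\<chi> i. x $ g i)"

lemma linear_relabel: "linear (relabel g)"
  by (rule linearI) (simp_all add: relabel_def vec_eq_iff)

lemma inj_relabel:
  fixes g :: "'k::finite \<Rightarrow> 'n::finite"
  assumes "surj g"
  shows "inj (relabel g)"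
proof
  fix x y :: "real^'n" assume "relabel g x = relabel g y"
  then have xy: "x $ g i = y $ g i" for i by (simp add: relabel_def vec_eq_iff)
  have "x $ j = y $ j" for j
  proof -
    obtain i where "j = g i" using surjD[OF assms] by blast
    with xy show ?thesis by simp
  qed
  then show "x = y" by (simp add: vec_eq_iff)
qed

lemma relabel_matrix_vector_mult:
  fixes A :: "real^'n::finite^'n" and g :: "'k::finite \<Rightarrow> 'n"
  assumes "bij g"
  shows "relabel g (A *v x) = (\<chi> i j. A $ g i $ g j) *v relabel g x"
proof -
  have "(\<Sum>j\<in>UNIV. A $ g i $ j * x $ j) = (\<Sum>j\<in>UNIV. A $ g i $ g j * x $ g j)" for i
    using sum.reindex_bij_betw[OF assms, of "\<lambda>j. A $ g i $ j * x $ j"] by simp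
  then show ?thesis
    by (simp add: relabel_def matrix_vector_mult_def vec_eq_iff)
qed

lemma prod_Basis_cart: "(\<Prod>b\<in>Basis. x \<bullet> b) = (\<Prod>i\<in>UNIV. (x :: real^'n) $ i)"
  by (simp add: Basis_vec_def cart_eq_inner_axis axis_eq_axis prod.UNION_disjoint)

lemma emeasure_lborel_box_cart:
  fixes l u :: "real^'n"
  assumes "\<And>i. l $ i \<le> u $ i"
  shows "emeasure lborel (box l u) = (\<Prod>i\<in>UNIV. ennreal (u $ i - l $ i))"
proof -
  have "l \<bullet> b \<le> u \<bullet> b" if "b \<in> Basis" for b
    using that assms by (auto simp: Basis_vec_def inner_axis)
  then have "emeasure lborel (box l u) = ennreal (\<Prod>i\<in>UNIV. (u - l) $ i)"
    by (simp only: emeasure_lborel_box prod_Basis_cart)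
  also have "\<dots> = (\<Prod>i\<in>UNIV. ennreal (u $ i - l $ i))"
    using assms by (simp add: prod_ennreal)
  finally show ?thesis .
qed

lemma vimage_relabel_box:
  fixes g :: "'k::finite \<Rightarrow> 'n::finite" and l u :: "real^'k"
  assumes g: "bij g"
  shows "relabel g -` box l u = box (\<chi> j. l $ inv g j) (\<chi> j. u $ inv g j)"
proof -
  have all_g: "(\<forall>j. Q j) \<longleftrightarrow> (\<forall>i. Q (g i))" for Q
    using g by (metis bij_pointE)
  have "x \<in> box (\<chi> j. l $ inv g j) (\<chi> j. u $ inv g j) \<longleftrightarrow> (\<forall>i. l $ i < x $ g i \<and> x $ g i < u $ i)"
    for x :: "real^'n"
    unfolding mem_box_cart vec_lambda_beta
      all_g[where Q = "\<lambda>j. l $ inv g j < x $ j \<and> x $ j < u $ inv g j"]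
    by (simp add: inv_f_f[OF bij_is_inj[OF g]])
  then show ?thesis
    by (auto simp: mem_box_cart relabel_def)
qed

lemma borel_measurable_relabel: "relabel g \<in> borel_measurable lborel"
  using borel_measurable_continuous_onI[OF linear_continuous_on[OF
      linear_relabel[unfolded linear_conv_bounded_linear]]] by simp

lemma lborel_distr_relabel:
  fixes g :: "'k::finite \<Rightarrow> 'n::finite"
  assumes g: "bij g"
  shows "distr lborel borel (relabel g) = (lborel :: (real^'k) measure)"
proof (rule lborel_eqI[symmetric])
  fix l u :: "real^'k" assume lu_Basis: "\<And>b. b\<in>Basis \<Longrightarrow> l\<bullet>b \<le> u\<bullet>b"
  have lu: "l $ i \<le> u $ i" for i
    using lu_Basis[of "axis i 1"] by (simp add: axis_in_Basis_iff cart_eq_inner_axis)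
  have "relabel g \<in> borel_measurable lborel"
    by (rule borel_measurable_relabel)
  then have "emeasure (distr lborel borel (relabel g)) (box l u)
      = emeasure lborel (relabel g -` box l u \<inter> space lborel)"
    by (rule emeasure_distr) simp
  also have "\<dots> = emeasure lborel (box (\<chi> j. l $ inv g j) (\<chi> j. u $ inv g j) :: (real^'n) set)"
    by (simp only: vimage_relabel_box[OF g] space_lborel space_borel Int_UNIV_right)
  also have "\<dots> = (\<Prod>j\<in>UNIV. ennreal (u $ inv g j - l $ inv g j))"
    using lu by (simp add: emeasure_lborel_box_cart)
  also have "\<dots> = (\<Prod>i\<in>UNIV. ennreal (u $ i - l $ i))"
    using prod.reindex_bij_betw[OF bij_betw_inv_into[OF g], of "\<lambda>i. ennreal (u $ i - l $ i)"]
    by (simp add: o_def)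
  also have "\<dots> = (\<Prod>b\<in>Basis. (u - l) \<bullet> b)"
    using lu by (simp add: prod_Basis_cart prod_ennreal)
  finally show "emeasure (distr lborel borel (relabel g)) (box l u) = (\<Prod>b\<in>Basis. (u - l) \<bullet> b)" .
qed simp

lemma measure_relabel_image:
  fixes g :: "'k::finite \<Rightarrow> 'n::finite" and S :: "(real^'n) set"
  assumes g: "bij g" and S: "compact S"
  shows "measure lebesgue (relabel g ` S) = measure lebesgue S"
proof -
  have image: "compact (relabel g ` S)"
    by (rule compact_linear_image[OF linear_relabel S])
  have "relabel g \<in> borel_measurable lborel"
    by (rule borel_measurable_relabel)
  moreover have "relabel g -` relabel g ` S = S"
    by (rule inj_vimage_image_eq[OF inj_relabel[OF bij_is_surj[OF g]]])
  ultimately have "measure (distr lborel borel (relabel g)) (relabel g ` S) = measure lborel S"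
    using image by (simp add: measure_distr borel_compact)
  then show ?thesis
    using image S by (simp add: lborel_distr_relabel[OF g] borel_compact)
qed

lemma measure_matrix_image_compact:
  fixes A :: "real^'n::finite^'n" and S :: "(real^'n) set"
  assumes S: "compact S"
  shows "measure lebesgue ((*v) A ` S) = \<bar>det A\<bar> * measure lebesgue S"
proof -
  obtain g :: "'n ordered_copy \<Rightarrow> 'n" where g: "bij g"
    using finite_same_card_bij[of "UNIV :: 'n ordered_copy set" "UNIV :: 'n set"]
    by (auto simp: card_ordered_copy)
  define A' :: "real^'n ordered_copy^'n ordered_copy" where "A' = (\<chi> i j. A $ g i $ g j)"
  have "compact ((*v) A ` S)"
    by (rule compact_linear_image[OF matrix_vector_mul_linear S])
  then have "measure lebesgue ((*v) A ` S) = measure lebesgue (relabel g ` (*v) A ` S)"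
    by (simp add: measure_relabel_image[OF g])
  also have "relabel g ` (*v) A ` S = (*v) A' ` relabel g ` S"
    by (simp add: image_image relabel_matrix_vector_mult[OF g] A'_def)
  also have "measure lebesgue ((*v) A' ` relabel g ` S) = \<bar>det A'\<bar> * measure lebesgue (relabel g ` S)"
    using measure_linear_image[OF matrix_vector_mul_linear, of "relabel g ` S" A']
      lmeasurable_compact[OF compact_linear_image[OF linear_relabel[of g] S]]
    by simp
  also have "\<dots> = \<bar>det A\<bar> * measure lebesgue S"
    by (simp add: A'_def det_relabel[OF g] measure_relabel_image[OF g S])
  finally show ?thesis .
qed

section \<open>Volume of an ellipsoid\<close>

lemma ellipsoid_eq_image_cball:
  fixes P B :: "real^'n^'n"
  assumes B: "invertible B" and PB: "transpose B ** P ** B = mat 1"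
  shows "ellipsoid P = (*v) B ` cball 0 1"
proof -
  obtain B' where B': "B ** B' = mat 1" using B unfolding invertible_def by blast
  have norm_eq: "(B *v y) \<bullet> (P *v (B *v y)) = y \<bullet> y" for y
    using quadratic_form_congruence[of B y P] PB by simp
  have unit_ball: "norm y \<le> 1 \<longleftrightarrow> y \<bullet> y \<le> 1" for y :: "real^'n"
    by (simp add: dot_square_norm abs_square_le_1)
  show ?thesis
  proof safe
    fix e assume e: "e \<in> ellipsoid P"
    have Be: "B *v (B' *v e) = e" using B' by (simp add: matrix_vector_mul_assoc)
    then have "(B' *v e) \<bullet> (B' *v e) \<le> 1"
      using e norm_eq[of "B' *v e"] by (simp add: ellipsoid_def)
    then have "B' *v e \<in> cball 0 1" by (simp add: unit_ball)
    with Be show "e \<in> (*v) B ` cball 0 1" by (metis image_eqI)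
  qed (simp add: ellipsoid_def norm_eq unit_ball)
qed

lemma det_congruent_identity:
  fixes P B :: "real^'n^'n"
  assumes "transpose B ** P ** B = mat 1"
  shows "(det B)\<^sup>2 * det P = 1"
proof -
  have "det (transpose B ** P ** B) = 1" using assms by simp
  then show ?thesis by (simp add: det_mul power2_eq_square mult_ac)
qed

lemma pd_det_pos:
  fixes P :: "real^'n^'n"
  assumes "pd P"
  shows "0 < det P"
proof (rule ccontr)
  obtain B :: "real^'n^'n" where "transpose B ** P ** B = mat 1"
    using pd_congruent_identity[OF assms] by blast
  then have one: "(det B)\<^sup>2 * det P = 1" by (rule det_congruent_identity)
  assume "\<not> 0 < det P"
  then have "(det B)\<^sup>2 * det P \<le> 0" by (simp add: mult_nonneg_nonpos)
  with one show False by simp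
qed

lemma measure_ellipsoid:
  fixes P :: "real^'n^'n"
  assumes "pd P"
  shows "measure lebesgue (ellipsoid P) = measure lebesgue (cball (0 :: real^'n) 1) / sqrt (det P)"
proof -
  obtain B :: "real^'n^'n" where B: "invertible B" "transpose B ** P ** B = mat 1"
    using pd_congruent_identity[OF assms] .
  have "\<bar>det B\<bar> = sqrt ((det B)\<^sup>2)" by simp
  also have "(det B)\<^sup>2 = 1 / det P"
    using det_congruent_identity[OF B(2)] pd_det_pos[OF assms] by (simp add: field_simps)
  finally have "\<bar>det B\<bar> = 1 / sqrt (det P)" by (simp add: real_sqrt_divide)
  then show ?thesis
    by (simp add: ellipsoid_eq_image_cball[OF B] measure_matrix_image_compact)
qed

lemma measure_ellipsoid_antimono:
  fixes P Q :: "real^'n^'n"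
  assumes "pd P" "pd Q" "det P \<le> det Q"
  shows "measure lebesgue (ellipsoid Q) \<le> measure lebesgue (ellipsoid P)"
proof -
  have "0 < sqrt (det P)" "0 < sqrt (det Q)"
    using assms(1,2) by (simp_all add: pd_det_pos)
  moreover have "sqrt (det P) \<le> sqrt (det Q)"
    using assms(3) by simp
  ultimately show ?thesis
    unfolding measure_ellipsoid[OF assms(1)] measure_ellipsoid[OF assms(2)]
    by (intro divide_left_mono) simp_all
qed

section \<open>Invariance of the ellipsoid under the error dynamics\<close>

lemma sum_UNIV_Plus:
  fixes f :: "('a::finite + 'b::finite) \<Rightarrow> 'c::comm_monoid_add"
  shows "(\<Sum>s\<in>UNIV. f s) = (\<Sum>i\<in>UNIV. f (Inl i)) + (\<Sum>i\<in>UNIV. f (Inr i))"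
  by (subst UNIV_Plus_UNIV[symmetric], subst sum.Plus) (auto simp: o_def)

definition lmi_vector :: "real^'n \<Rightarrow> real^'n \<Rightarrow> real^'n \<Rightarrow> real^'m \<Rightarrow> real^('n + ('n + ('n + 'm)))"
  where "lmi_vector e y u w = (\<chi> r. case r of Inl i \<Rightarrow> e $ i | Inr (Inl i) \<Rightarrow> y $ i
     | Inr (Inr (Inl i)) \<Rightarrow> u $ i | Inr (Inr (Inr i)) \<Rightarrow> w $ i)"

lemma lmi_quadratic_form:
  fixes e y u :: "real^'n" and w :: "real^'m" and P F :: "real^'n^'n"
  shows "lmi_vector e y u w \<bullet> (lmi_mat b om F L Sh P *v lmi_vector e y u w) =
    b * (e \<bullet> (P *v e)) + e \<bullet> ((transpose F ** P) *v y) + y \<bullet> ((P ** F) *v e) + y \<bullet> (P *v y)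
    + y \<bullet> (P *v u) - y \<bullet> ((P ** L ** Sh) *v w) + u \<bullet> (P *v y) + ((1 - b) / om) * (u \<bullet> u)
    - w \<bullet> ((Sh ** transpose L ** P) *v y) + ((1 - b) / om) * (w \<bullet> w)"
  unfolding lmi_vector_def lmi_mat_def Let_def inner_vec_def matrix_vector_mult_def
  by (simp add: sum_UNIV_Plus mat_def sum_distrib_left sum_distrib_right sum.distrib
       sum_subtractf sum_negf algebra_simps if_distrib cong: if_cong)

lemma lmi_quadratic_form_symmetric:
  fixes e y u :: "real^'n" and w :: "real^'m" and P F :: "real^'n^'n"
    and L :: "real^'m^'n" and Sh :: "real^'m^'m"
  assumes P: "transpose P = P" and Sh: "transpose Sh = Sh"
  shows "lmi_vector e y u w \<bullet> (lmi_mat b om F L Sh P *v lmi_vector e y u w) =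
    b * (e \<bullet> (P *v e)) + 2 * ((F *v e) \<bullet> (P *v y)) + y \<bullet> (P *v y) + 2 * (u \<bullet> (P *v y))
    - 2 * ((L *v (Sh *v w)) \<bullet> (P *v y)) + ((1 - b) / om) * (u \<bullet> u + w \<bullet> w)"
proof -
  have "e \<bullet> ((transpose F ** P) *v y) = (F *v e) \<bullet> (P *v y)"
    by (simp only: matrix_vector_mul_assoc[symmetric] inner_transpose_matrix)
  moreover have "y \<bullet> ((P ** F) *v e) = (F *v e) \<bullet> (P *v y)"
    by (simp only: matrix_vector_mul_assoc[symmetric]) (rule inner_symmetric_matrix[OF P])
  moreover have "y \<bullet> (P *v u) = u \<bullet> (P *v y)"
    by (rule inner_symmetric_matrix[OF P])
  moreover have "y \<bullet> ((P ** L ** Sh) *v w) = (L *v (Sh *v w)) \<bullet> (P *v y)"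
    by (simp only: matrix_vector_mul_assoc[symmetric]) (rule inner_symmetric_matrix[OF P])
  moreover have "w \<bullet> ((Sh ** transpose L ** P) *v y) = (L *v (Sh *v w)) \<bullet> (P *v y)"
  proof -
    have "w \<bullet> ((Sh ** transpose L ** P) *v y) = (transpose L *v (P *v y)) \<bullet> (Sh *v w)"
      by (simp only: matrix_vector_mul_assoc[symmetric]) (rule inner_symmetric_matrix[OF Sh])
    also have "\<dots> = (L *v (Sh *v w)) \<bullet> (P *v y)"
      by (simp only: inner_commute[of "transpose L *v _"] inner_transpose_matrix)
    finally show ?thesis .
  qed
  ultimately show ?thesis
    unfolding lmi_quadratic_form distrib_left by linarith
qed

lemma lmi_lyapunov_step:
  fixes P F :: "real^'n^'n" and L :: "real^'m^'n" and Sh :: "real^'m^'m"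
    and e v :: "real^'n" and z :: "real^'m"
  assumes lmi: "psd (lmi_mat b om F L Sh P)" and P: "transpose P = P" and Sh: "transpose Sh = Sh"
  defines "e' \<equiv> F *v e - L *v (Sh *v z) + v"
  shows "e' \<bullet> (P *v e') \<le> b * (e \<bullet> (P *v e)) + ((1 - b) / om) * (v \<bullet> v + z \<bullet> z)"
proof -
  let ?x = "lmi_vector e (- e') v z"
  have "e' \<bullet> (P *v e') = (F *v e) \<bullet> (P *v e') - (L *v (Sh *v z)) \<bullet> (P *v e') + v \<bullet> (P *v e')"
    by (simp add: e'_def inner_diff_left inner_add_left)
  moreover have "0 \<le> ?x \<bullet> (lmi_mat b om F L Sh P *v ?x)"
    using lmi by (simp add: psd_def)
  moreover have neg: "P *v (- e') = - (P *v e')"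
    by (metis diff_0 matrix_vector_mult_0_right matrix_vector_mult_diff_distrib)
  ultimately show ?thesis
    unfolding lmi_quadratic_form_symmetric[OF P Sh] neg inner_minus_left inner_minus_right minus_minus
    by linarith
qed

lemma traj_in_ellipsoid:
  fixes P F :: "real^'n^'n" and L :: "real^'m^'n" and Sh :: "real^'m^'m"
  assumes lmi: "psd (lmi_mat b (\<alpha> + vb) F L Sh P)"
    and P: "transpose P = P" and Sh: "transpose Sh = Sh"
    and b: "0 \<le> b" "b \<le> 1" and w: "0 < \<alpha> + vb"
    and z: "\<And>j. norm (z j) ^ 2 \<le> \<alpha>" and v: "\<And>j. norm (v j) ^ 2 \<le> vb"
  shows "traj F L Sh z v k \<in> ellipsoid P"
proof (induction k)
  case 0
  then show ?case by (simp add: ellipsoid_def)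
next
  case (Suc k)
  let ?e = "traj F L Sh z v k" and ?c = "(1 - b) / (\<alpha> + vb)"
  have c: "0 \<le> ?c" "?c * (\<alpha> + vb) = 1 - b" using b w by simp_all
  have "v k \<bullet> v k + z k \<bullet> z k \<le> \<alpha> + vb"
    using z[of k] v[of k] by (simp add: power2_norm_eq_inner[symmetric])
  then have "?c * (v k \<bullet> v k + z k \<bullet> z k) \<le> ?c * (\<alpha> + vb)"
    using c(1) by (rule mult_left_mono)
  also have "\<dots> = 1 - b" by (rule c(2))
  finally have "?c * (v k \<bullet> v k + z k \<bullet> z k) \<le> 1 - b" .
  moreover have "b * (?e \<bullet> (P *v ?e)) \<le> b"
    using Suc b by (simp add: ellipsoid_def mult_left_le)
  ultimately show ?case
    using lmi_lyapunov_step[OF lmi P Sh, where e = ?e and z = "z k" and v = "v k"]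
    unfolding ellipsoid_def traj.simps mem_Collect_eq by linarith
qed

lemma reach_set_subset_ellipsoid:
  fixes P F :: "real^'n^'n" and L :: "real^'m^'n" and Sh :: "real^'m^'m"
  assumes "psd (lmi_mat b (\<alpha> + vb) F L Sh P)" "transpose P = P" "transpose Sh = Sh"
    and "0 \<le> b" "b \<le> 1" "0 < \<alpha> + vb"
  shows "reach_set F L Sh \<alpha> vb \<subseteq> ellipsoid P"
  using traj_in_ellipsoid[OF assms] by (auto simp: reach_set_def)

theorem corollary1:
  fixes F :: "real^'n^'n" and L :: "real^'m^'n" and \<Sigma> Sh :: "real^'m^'m"
    and \<alpha> vb b \<omega> :: real and Ps :: "real^'n^'n"
  assumes "pd \<Sigma>" and "psd Sh" and "Sh ** Sh = \<Sigma>"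
    and "\<alpha> > 0" and "vb > 0" and "\<omega> = \<alpha> + vb"
    and "0 < b" and "b < 1"
    and "pd Ps" and "psd (lmi_mat b \<omega> F L Sh Ps)"
    and "\<forall>P. pd P \<and> psd (lmi_mat b \<omega> F L Sh P) \<longrightarrow> - ln (det Ps) \<le> - ln (det P)"
  shows "reach_set F L Sh \<alpha> vb \<subseteq> ellipsoid Ps
    \<and> (\<forall>P. pd P \<and> psd (lmi_mat b \<omega> F L Sh P) \<longrightarrow>
          measure lebesgue (ellipsoid Ps) \<le> measure lebesgue (ellipsoid P))"
proof
  have "transpose Ps = Ps" "transpose Sh = Sh"
    using \<open>pd Ps\<close> \<open>psd Sh\<close> by (simp_all add: pd_def psd_def)
  then show "reach_set F L Sh \<alpha> vb \<subseteq> ellipsoid Ps"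
    using reach_set_subset_ellipsoid[of b \<alpha> vb F L Sh Ps] assms(4-8,10) by simp
  show "\<forall>P. pd P \<and> psd (lmi_mat b \<omega> F L Sh P) \<longrightarrow>
          measure lebesgue (ellipsoid Ps) \<le> measure lebesgue (ellipsoid P)"
  proof (intro allI impI)
    fix P assume P: "pd P \<and> psd (lmi_mat b \<omega> F L Sh P)"
    then have "ln (det P) \<le> ln (det Ps)" using assms(11) by simp
    moreover have "0 < det P" "0 < det Ps"
      using P \<open>pd Ps\<close> by (simp_all add: pd_det_pos)
    ultimately have "det P \<le> det Ps" by simp
    with P \<open>pd Ps\<close> show "measure lebesgue (ellipsoid Ps) \<le> measure lebesgue (ellipsoid P)"
      by (simp add: measure_ellipsoid_antimono)
  qed
qed
end
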